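(* Let $\mathbf{CMet}$ be the category of complete generalized metric spaces and nonexpanding maps, enriched over itself. For every $\delta>0$, the hom-functor $\mathbf{CMet}(2_\delta,-)\colon\mathbf{CMet}\to\mathbf{CMet}$ preserves directed colimits of diagrams consisting of convex complete metric spaces and isometries; that is, if $k_i\colon K_i\to K$ ($i\in I$) is a colimit in $\mathbf{CMet}$ of a directed diagram of convex spaces $K_i$ and isometries, then the canonical map $\operatorname{colim}_i\mathbf{CMet}(2_\delta,K_i)\to\mathbf{CMet}(2_\delta,K)$ is an isomorphism in $\mathbf{CMet}$.
   Context: A generalized metric space allows distance $\infty$; morphisms of $\mathbf{CMet}$ are nonexpanding maps $f$ ($d(fx,fy)\le d(x,y)$). The internal hom $\mathbf{CMet}(A,B)$ is the set of nonexpanding maps with the supremum metric $d(f,g)=\sup_x d(fx,gx)$. For $\delta>0$, $2_\delta$ is the two-point metric space whose points are at distance $\delta$. A metric space is convex if for any points $x,y$ there is $z$ with $d(x,z)+d(z,y)=d(x,y)$. A directed colimit of isometries in $\mathbf{CMet}$ is the completion of the union (directed colimit in metric spaces) of the diagram. *)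

theory Defs
  imports Complex_Main "HOL-Library.Extended_Nonnegative_Real" "HOL-Library.FuncSet"
begin

definition gmetric :: "'a set \<Rightarrow> ('a \<Rightarrow> 'a \<Rightarrow> ennreal) \<Rightarrow> bool" where
  "gmetric A d \<longleftrightarrow>
     (\<forall>x\<in>A. \<forall>y\<in>A. (d x y = 0 \<longleftrightarrow> x = y) \<and> d x y = d y x) \<and>
     (\<forall>x\<in>A. \<forall>y\<in>A. \<forall>z\<in>A. d x z \<le> d x y + d y z)"

definition cauchy_in :: "'a set \<Rightarrow> ('a \<Rightarrow> 'a \<Rightarrow> ennreal) \<Rightarrow> (nat \<Rightarrow> 'a) \<Rightarrow> bool" where
  "cauchy_in A d x \<longleftrightarrow> (\<forall>n. x n \<in> A) \<and>
     (\<forall>e::real. e > 0 \<longrightarrow> (\<exists>N. \<forall>m\<ge>N. \<forall>n\<ge>N. d (x m) (x n) < ennreal e))"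

definition converges_in :: "'a set \<Rightarrow> ('a \<Rightarrow> 'a \<Rightarrow> ennreal) \<Rightarrow> (nat \<Rightarrow> 'a) \<Rightarrow> 'a \<Rightarrow> bool" where
  "converges_in A d x l \<longleftrightarrow> l \<in> A \<and>
     (\<forall>e::real. e > 0 \<longrightarrow> (\<exists>N. \<forall>n\<ge>N. d (x n) l < ennreal e))"

definition complete_gmetric :: "'a set \<Rightarrow> ('a \<Rightarrow> 'a \<Rightarrow> ennreal) \<Rightarrow> bool" where
  "complete_gmetric A d \<longleftrightarrow> gmetric A d \<and>
     (\<forall>x. cauchy_in A d x \<longrightarrow> (\<exists>l. converges_in A d x l))"

definition nonexp :: "'a set \<Rightarrow> ('a \<Rightarrow> 'a \<Rightarrow> ennreal) \<Rightarrow> 'b set \<Rightarrow> ('b \<Rightarrow> 'b \<Rightarrow> ennreal) \<Rightarrow> ('a \<Rightarrow> 'b) \<Rightarrow> bool" where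
  "nonexp A dA B dB g \<longleftrightarrow> g \<in> A \<rightarrow> B \<and> (\<forall>x\<in>A. \<forall>y\<in>A. dB (g x) (g y) \<le> dA x y)"

definition isometry :: "'a set \<Rightarrow> ('a \<Rightarrow> 'a \<Rightarrow> ennreal) \<Rightarrow> 'b set \<Rightarrow> ('b \<Rightarrow> 'b \<Rightarrow> ennreal) \<Rightarrow> ('a \<Rightarrow> 'b) \<Rightarrow> bool" where
  "isometry A dA B dB g \<longleftrightarrow> g \<in> A \<rightarrow> B \<and> (\<forall>x\<in>A. \<forall>y\<in>A. dB (g x) (g y) = dA x y)"

definition hom_carrier :: "'a set \<Rightarrow> ('a \<Rightarrow> 'a \<Rightarrow> ennreal) \<Rightarrow> 'b set \<Rightarrow> ('b \<Rightarrow> 'b \<Rightarrow> ennreal) \<Rightarrow> ('a \<Rightarrow> 'b) set" where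
  "hom_carrier A dA B dB = {g \<in> extensional A. nonexp A dA B dB g}"

definition sup_dist :: "'a set \<Rightarrow> ('b \<Rightarrow> 'b \<Rightarrow> ennreal) \<Rightarrow> ('a \<Rightarrow> 'b) \<Rightarrow> ('a \<Rightarrow> 'b) \<Rightarrow> ennreal" where
  "sup_dist A dB = (\<lambda>g h. SUP x\<in>A. dB (g x) (h x))"

definition hom_map :: "'a set \<Rightarrow> ('b \<Rightarrow> 'c) \<Rightarrow> ('a \<Rightarrow> 'b) \<Rightarrow> ('a \<Rightarrow> 'c)" where
  "hom_map A k = (\<lambda>g. restrict (k \<circ> g) A)"

definition two_pt_carrier :: "bool set" where
  "two_pt_carrier = UNIV"

definition two_pt_dist :: "real \<Rightarrow> bool \<Rightarrow> bool \<Rightarrow> ennreal" where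
  "two_pt_dist \<delta> = (\<lambda>x y. if x = y then 0 else ennreal \<delta>)"

definition menger_convex :: "'a set \<Rightarrow> ('a \<Rightarrow> 'a \<Rightarrow> ennreal) \<Rightarrow> bool" where
  "menger_convex A d \<longleftrightarrow>
     (\<forall>x\<in>A. \<forall>y\<in>A. x \<noteq> y \<longrightarrow> (\<exists>z\<in>A. z \<noteq> x \<and> z \<noteq> y \<and> d x z + d z y = d x y))"

definition directed_diagram ::
  "('i \<Rightarrow> 'i \<Rightarrow> bool) \<Rightarrow> 'i set \<Rightarrow> ('i \<Rightarrow> 'a set) \<Rightarrow> ('i \<Rightarrow> 'a \<Rightarrow> 'a \<Rightarrow> ennreal)
    \<Rightarrow> ('i \<Rightarrow> 'i \<Rightarrow> 'a \<Rightarrow> 'a) \<Rightarrow> bool" where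
  "directed_diagram le I S d f \<longleftrightarrow>
     I \<noteq> {} \<and>
     (\<forall>i\<in>I. le i i) \<and>
     (\<forall>i\<in>I. \<forall>j\<in>I. \<forall>l\<in>I. le i j \<longrightarrow> le j l \<longrightarrow> le i l) \<and>
     (\<forall>i\<in>I. \<forall>j\<in>I. \<exists>l\<in>I. le i l \<and> le j l) \<and>
     (\<forall>i\<in>I. complete_gmetric (S i) (d i)) \<and>
     (\<forall>i\<in>I. \<forall>j\<in>I. le i j \<longrightarrow> isometry (S i) (d i) (S j) (d j) (f i j)) \<and>
     (\<forall>i\<in>I. \<forall>x\<in>S i. f i i x = x) \<and>
     (\<forall>i\<in>I. \<forall>j\<in>I. \<forall>l\<in>I. le i j \<longrightarrow> le j l \<longrightarrow> (\<forall>x\<in>S i. f j l (f i j x) = f i l x))"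

text \<open>A colimit cocone in CMet of a directed diagram of isometries: the colimit is the
  completion of the union, i.e. a complete space receiving compatible isometries whose
  joint image is dense.\<close>

definition dir_colim_cocone ::
  "('i \<Rightarrow> 'i \<Rightarrow> bool) \<Rightarrow> 'i set \<Rightarrow> ('i \<Rightarrow> 'a set) \<Rightarrow> ('i \<Rightarrow> 'a \<Rightarrow> 'a \<Rightarrow> ennreal)
    \<Rightarrow> ('i \<Rightarrow> 'i \<Rightarrow> 'a \<Rightarrow> 'a) \<Rightarrow> 'b set \<Rightarrow> ('b \<Rightarrow> 'b \<Rightarrow> ennreal) \<Rightarrow> ('i \<Rightarrow> 'a \<Rightarrow> 'b) \<Rightarrow> bool" where
  "dir_colim_cocone le I S d f T dT k \<longleftrightarrow>
     directed_diagram le I S d f \<and>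
     complete_gmetric T dT \<and>
     (\<forall>i\<in>I. isometry (S i) (d i) T dT (k i)) \<and>
     (\<forall>i\<in>I. \<forall>j\<in>I. le i j \<longrightarrow> (\<forall>x\<in>S i. k j (f i j x) = k i x)) \<and>
     (\<forall>x\<in>T. \<forall>e::real. e > 0 \<longrightarrow> (\<exists>i\<in>I. \<exists>y\<in>S i. dT (k i y) x < ennreal e))"

end

theory Submission
  imports Defs
begin

text \<open>A nonexpanding map \<open>2\<^sub>\<delta> \<rightarrow> K\<close> is a pair of points \<open>a, b\<close> of \<open>K\<close> at distance at most
  \<open>\<delta>\<close>. Approximate \<open>a\<close> and \<open>b\<close> within \<open>\<eta>\<close> by points \<open>x, y\<close> of a single stage \<open>K\<^sub>l\<close>;
  then \<open>d(x, y) \<le> \<delta> + 2\<eta>\<close>, and by convexity there is \<open>z\<close> with \<open>d(x, z) \<le> \<delta>\<close> and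
  \<open>d(z, y) \<le> 2\<eta>\<close>, so the pair \<open>(x, z)\<close> is a map \<open>2\<^sub>\<delta> \<rightarrow> K\<^sub>l\<close> within \<open>3\<eta>\<close> of \<open>(a, b)\<close>.
  The rest of the colimit property (completeness of hom-spaces, postcomposition with isometries)
  holds for any domain in place of \<open>2\<^sub>\<delta>\<close>.

  The point \<open>z\<close> comes from Menger's theorem: in a complete convex metric space every
  \<open>0 \<le> t \<le> d(x, y)\<close> is realised as \<open>d(x, z)\<close> with \<open>z\<close> metrically between \<open>x\<close> and \<open>y\<close>. It is
  proved by shrinking pairs \<open>(w, v)\<close> on a geodesic \<open>x, w, v, y\<close> that bracket the distance \<open>t\<close>,
  each time achieving at least half of the largest possible decrease of \<open>d(w, v)\<close>; the limit pair
  must collapse, as a point strictly between its two members would permit a decrease that the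
  greedy choices rule out.\<close>

locale complete_convex_metric =
  fixes A :: "'a set" and r :: "'a \<Rightarrow> 'a \<Rightarrow> real"
  assumes triangle: "p \<in> A \<Longrightarrow> q \<in> A \<Longrightarrow> s \<in> A \<Longrightarrow> r p s \<le> r p q + r q s"
    and commute: "p \<in> A \<Longrightarrow> q \<in> A \<Longrightarrow> r p q = r q p"
    and zero_iff: "p \<in> A \<Longrightarrow> q \<in> A \<Longrightarrow> r p q = 0 \<longleftrightarrow> p = q"
    and complete: "(\<forall>n. \<sigma> n \<in> A) \<Longrightarrow> (\<forall>e>0. \<exists>N. \<forall>m\<ge>N. \<forall>n\<ge>N. r (\<sigma> m) (\<sigma> n) < e)
        \<Longrightarrow> \<exists>l\<in>A. (\<lambda>n. r (\<sigma> n) l) \<longlonglongrightarrow> 0"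
    and convex: "p \<in> A \<Longrightarrow> q \<in> A \<Longrightarrow> p \<noteq> q \<Longrightarrow> \<exists>u\<in>A. u \<noteq> p \<and> u \<noteq> q \<and> r p u + r u q = r p q"
begin

lemma nonneg: "p \<in> A \<Longrightarrow> q \<in> A \<Longrightarrow> 0 \<le> r p q"
  using triangle[of p q p] commute[of p q] zero_iff[of p p] by auto

lemma self_zero [simp]: "p \<in> A \<Longrightarrow> r p p = 0"
  using zero_iff by auto

lemma pos: "p \<in> A \<Longrightarrow> q \<in> A \<Longrightarrow> p \<noteq> q \<Longrightarrow> 0 < r p q"
  using nonneg zero_iff by force

lemma tendsto_dist:
  assumes "\<And>n. p n \<in> A" "\<And>n. q n \<in> A" "l \<in> A" "m \<in> A"
    and lim: "(\<lambda>n. r (p n) l) \<longlonglongrightarrow> 0" "(\<lambda>n. r (q n) m) \<longlonglongrightarrow> 0"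
  shows "(\<lambda>n. r (p n) (q n)) \<longlonglongrightarrow> r l m"
proof (rule real_tendsto_sandwich)
  have "r (p n) (q n) \<le> r (p n) l + r l m + r m (q n)" "r l m \<le> r l (p n) + r (p n) (q n) + r (q n) m" for n
    using triangle[of "p n" l "q n"] triangle[of l m "q n"]
      triangle[of l "p n" m] triangle[of "p n" "q n" m] assms(1-4) by fastforce+
  then show "\<forall>\<^sub>F n in sequentially. r l m - (r (p n) l + r (q n) m) \<le> r (p n) (q n)"
    "\<forall>\<^sub>F n in sequentially. r (p n) (q n) \<le> r l m + (r (p n) l + r (q n) m)"
    using commute assms(1-4) by (auto simp: algebra_simps)
  show "(\<lambda>n. r l m - (r (p n) l + r (q n) m)) \<longlonglongrightarrow> r l m"
    "(\<lambda>n. r l m + (r (p n) l + r (q n) m)) \<longlonglongrightarrow> r l m"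
    using tendsto_diff[OF tendsto_const tendsto_add[OF lim]]
      tendsto_add[OF tendsto_const tendsto_add[OF lim]] by simp_all
qed

lemma geodesic_sequence_limit:
  assumes p: "\<And>n. p n \<in> A" and dist: "\<And>m n. r (p m) (p n) = \<bar>a m - a n\<bar>"
    and a: "incseq a" "a \<longlonglongrightarrow> L"
  shows "\<exists>l\<in>A. (\<lambda>n. r (p n) l) \<longlonglongrightarrow> 0 \<and> (\<forall>n. r (p n) l = L - a n)"
proof -
  have "\<exists>N. \<forall>m\<ge>N. \<forall>n\<ge>N. r (p m) (p n) < e" if "e > 0" for e
    using LIMSEQ_imp_Cauchy[OF a(2)] that unfolding Cauchy_iff dist by auto
  then obtain l where l: "l \<in> A" "(\<lambda>n. r (p n) l) \<longlonglongrightarrow> 0"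
    using complete[of p] p by blast
  have "r (p n) l = L - a n" for n
  proof -
    have "(\<lambda>m. r (p n) (p m)) \<longlonglongrightarrow> r (p n) l"
      using tendsto_dist[of "\<lambda>_. p n" p "p n" l] p l by simp
    moreover have "(\<lambda>m. r (p n) (p m)) \<longlonglongrightarrow> \<bar>a n - L\<bar>"
      unfolding dist by (intro tendsto_intros a(2))
    ultimately show ?thesis
      using LIMSEQ_unique incseq_le[OF a, of n] by fastforce
  qed
  with l show ?thesis by blast
qed

definition gap :: "'a \<times> 'a \<Rightarrow> real" where
  "gap s = r (fst s) (snd s)"

definition nested :: "'a \<times> 'a \<Rightarrow> 'a \<times> 'a \<Rightarrow> bool" where
  "nested s s' \<longleftrightarrow> fst s' \<in> A \<and> snd s' \<in> A \<and>
     r (fst s) (fst s') + gap s' + r (snd s') (snd s) = gap s"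

lemma nested_refl: "fst s \<in> A \<Longrightarrow> snd s \<in> A \<Longrightarrow> nested s s"
  unfolding nested_def by auto

lemma nested_trans:
  assumes "fst s \<in> A" "snd s \<in> A" "nested s s'" "nested s' s''"
  shows "nested s s''"
proof -
  obtain w v w' v' w'' v'' where s: "s = (w, v)" "s' = (w', v')" "s'' = (w'', v'')"
    by (cases s, cases s', cases s'')
  have A: "w \<in> A" "v \<in> A" "w' \<in> A" "v' \<in> A" "w'' \<in> A" "v'' \<in> A"
    using assms unfolding nested_def s by auto
  have "r w w'' \<le> r w w' + r w' w''" "r v'' v \<le> r v'' v' + r v' v"
    "r w v \<le> r w w'' + r w'' v" "r w'' v \<le> r w'' v'' + r v'' v"
    using triangle A by auto
  then show ?thesis using assms A unfolding nested_def gap_def s by auto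
qed

context
  fixes x y t
  assumes x: "x \<in> A" and y: "y \<in> A" and t: "0 \<le> t" "t \<le> r x y"
begin

definition admissible :: "'a \<times> 'a \<Rightarrow> bool" where
  "admissible s \<longleftrightarrow> fst s \<in> A \<and> snd s \<in> A \<and> r x (fst s) + gap s + r (snd s) y = r x y
     \<and> r x (fst s) \<le> t \<and> t \<le> r x (fst s) + gap s"

lemma admissible_start: "admissible (x, y)"
  unfolding admissible_def gap_def using x y t by auto

lemma gap_admissible_nonneg: "admissible s \<Longrightarrow> 0 \<le> gap s"
  unfolding admissible_def gap_def using nonneg by auto

lemma admissible_nested:
  assumes "admissible s" "nested s s'"
  shows "r x (fst s') = r x (fst s) + r (fst s) (fst s')"
    and "r (snd s') y = r (snd s') (snd s) + r (snd s) y"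
    and "r x (fst s') + gap s' + r (snd s') y = r x y"
proof -
  obtain w v w' v' where s: "s = (w, v)" "s' = (w', v')" by (cases s, cases s')
  have A: "w \<in> A" "v \<in> A" "w' \<in> A" "v' \<in> A"
    using assms unfolding admissible_def nested_def s by auto
  have "r x w' \<le> r x w + r w w'" "r v' y \<le> r v' v + r v y"
    "r x v' \<le> r x w' + r w' v'" "r x y \<le> r x v' + r v' y"
    using triangle A x y by auto
  then show "r x (fst s') = r x (fst s) + r (fst s) (fst s')"
    "r (snd s') y = r (snd s') (snd s) + r (snd s) y"
    "r x (fst s') + gap s' + r (snd s') y = r x y"
    using assms unfolding admissible_def nested_def gap_def s by auto
qed

definition refinements :: "'a \<times> 'a \<Rightarrow> ('a \<times> 'a) set" where
  "refinements s = {s'. admissible s' \<and> nested s s'}"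

lemma half_greedy_refinement_exists:
  assumes "admissible s"
  shows "\<exists>s'\<in>refinements s. \<forall>s''\<in>refinements s. gap s - gap s'' \<le> 2 * (gap s - gap s')"
proof -
  define V where "V = (\<lambda>s'. gap s - gap s') ` refinements s"
  have s: "s \<in> refinements s"
    using assms nested_refl unfolding refinements_def admissible_def by auto
  have bdd: "bdd_above V"
    unfolding V_def bdd_above_def refinements_def using gap_admissible_nonneg
    by (intro exI[of _ "gap s"]) auto
  have upper: "\<forall>s''\<in>refinements s. gap s - gap s'' \<le> Sup V"
    using cSup_upper[OF _ bdd] unfolding V_def by force
  show ?thesis
  proof (cases "Sup V \<le> 0")
    case True
    with upper s show ?thesis by (intro bexI[of _ s]) auto
  next
    case False
    then have "Sup V / 2 < Sup V" by auto
    then obtain v where "v \<in> V" "Sup V / 2 < v"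
      using less_cSup_iff[OF _ bdd] s V_def by blast
    with upper show ?thesis unfolding V_def by force
  qed
qed

definition refine :: "'a \<times> 'a \<Rightarrow> 'a \<times> 'a" where
  "refine s = (SOME s'. s' \<in> refinements s \<and>
     (\<forall>s''\<in>refinements s. gap s - gap s'' \<le> 2 * (gap s - gap s')))"

lemma refine_half_greedy:
  "admissible s \<Longrightarrow> refine s \<in> refinements s \<and>
     (\<forall>s''\<in>refinements s. gap s - gap s'' \<le> 2 * (gap s - gap (refine s)))"
  unfolding refine_def using someI_ex[OF half_greedy_refinement_exists[unfolded Bex_def]] by blast

definition pairs :: "nat \<Rightarrow> 'a \<times> 'a" where
  "pairs n = (refine ^^ n) (x, y)"

lemma admissible_pairs: "admissible (pairs n)"
  by (induction n) (auto simp: pairs_def admissible_start refinements_def dest: refine_half_greedy)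

lemma pairs_in: "fst (pairs n) \<in> A" "snd (pairs n) \<in> A"
  using admissible_pairs[of n] unfolding admissible_def by auto

lemma pairs_greedy:
  "s \<in> refinements (pairs n) \<Longrightarrow> gap (pairs n) - gap s \<le> 2 * (gap (pairs n) - gap (pairs (Suc n)))"
  using refine_half_greedy[OF admissible_pairs[of n]] unfolding pairs_def by auto

lemma pairs_nested: "n \<le> m \<Longrightarrow> nested (pairs n) (pairs m)"
proof (induction m rule: dec_induct)
  case base
  then show ?case using nested_refl pairs_in by auto
next
  case (step m)
  moreover have "nested (pairs m) (pairs (Suc m))"
    using refine_half_greedy[OF admissible_pairs[of m]] unfolding refinements_def pairs_def by auto
  ultimately show ?case using nested_trans pairs_in by blast
qed

lemma pairs_fst_dist: "r (fst (pairs m)) (fst (pairs n)) = \<bar>r x (fst (pairs m)) - r x (fst (pairs n))\<bar>"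
  using admissible_nested(1)[OF admissible_pairs pairs_nested, of m n]
    admissible_nested(1)[OF admissible_pairs pairs_nested, of n m]
    nonneg[OF pairs_in(1) pairs_in(1)] commute[OF pairs_in(1) pairs_in(1), of m n]
  by (cases "m \<le> n") auto

lemma pairs_snd_dist: "r (snd (pairs m)) (snd (pairs n)) = \<bar>r (snd (pairs m)) y - r (snd (pairs n)) y\<bar>"
  using admissible_nested(2)[OF admissible_pairs pairs_nested, of m n]
    admissible_nested(2)[OF admissible_pairs pairs_nested, of n m]
    nonneg[OF pairs_in(2) pairs_in(2)] commute[OF pairs_in(2) pairs_in(2), of m n]
  by (cases "m \<le> n") auto

lemma pairs_limit:
  "\<exists>s. admissible s \<and> (\<forall>n. nested (pairs n) s) \<and> (\<lambda>n. gap (pairs n)) \<longlonglongrightarrow> gap s"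
proof -
  define a where "a n = r x (fst (pairs n))" for n
  define b where "b n = r (snd (pairs n)) y" for n
  have sum: "a n + gap (pairs n) + b n = r x y" and a_le: "a n \<le> t" and le_b: "t \<le> r x y - b n"
    for n using admissible_pairs[of n] unfolding admissible_def a_def b_def by auto
  have "b n \<le> r x y" for n
    using sum[of n] nonneg[OF x pairs_in(1), of n] gap_admissible_nonneg[OF admissible_pairs, of n]
    unfolding a_def by force
  have "incseq a" "incseq b"
    unfolding incseq_def a_def b_def
    using admissible_nested(1,2)[OF admissible_pairs pairs_nested] nonneg pairs_in by fastforce+
  moreover obtain L M where "a \<longlonglongrightarrow> L" "b \<longlonglongrightarrow> M"
    using incseq_convergent[OF \<open>incseq a\<close>] incseq_convergent[OF \<open>incseq b\<close>] a_le \<open>\<And>n. b n \<le> r x y\<close> by metis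
  moreover have "r (fst (pairs m)) (fst (pairs n)) = \<bar>a m - a n\<bar>"
    "r (snd (pairs m)) (snd (pairs n)) = \<bar>b m - b n\<bar>" for m n
    unfolding a_def b_def by (rule pairs_fst_dist pairs_snd_dist)+
  ultimately obtain w v where
    w: "w \<in> A" "(\<lambda>n. r (fst (pairs n)) w) \<longlonglongrightarrow> 0" "\<And>n. r (fst (pairs n)) w = L - a n" and
    v: "v \<in> A" "(\<lambda>n. r (snd (pairs n)) v) \<longlonglongrightarrow> 0" "\<And>n. r (snd (pairs n)) v = M - b n"
    using geodesic_sequence_limit[of "\<lambda>n. fst (pairs n)" a L]
      geodesic_sequence_limit[of "\<lambda>n. snd (pairs n)" b M] pairs_in by metis
  have "a \<longlonglongrightarrow> r x w"
    using tendsto_dist[of "\<lambda>_. x" "\<lambda>n. fst (pairs n)" x w] x pairs_in(1) w unfolding a_def by simp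
  then have xw: "r x w = L" using \<open>a \<longlonglongrightarrow> L\<close> LIMSEQ_unique by blast
  have "b \<longlonglongrightarrow> r v y"
    using tendsto_dist[of "\<lambda>n. snd (pairs n)" "\<lambda>_. y" v y] y pairs_in(2) v unfolding b_def by simp
  then have vy: "r v y = M" using \<open>b \<longlonglongrightarrow> M\<close> LIMSEQ_unique by blast
  have gap_lim: "(\<lambda>n. gap (pairs n)) \<longlonglongrightarrow> r w v"
    unfolding gap_def using tendsto_dist[OF pairs_in w(1) v(1) w(2) v(2)] .
  moreover have "(\<lambda>n. gap (pairs n)) \<longlonglongrightarrow> r x y - L - M"
  proof -
    have "(\<lambda>n. gap (pairs n)) = (\<lambda>n. r x y - a n - b n)"
      using sum by (auto simp: fun_eq_iff algebra_simps)
    then show ?thesis using \<open>a \<longlonglongrightarrow> L\<close> \<open>b \<longlonglongrightarrow> M\<close> by (auto intro!: tendsto_intros)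
  qed
  ultimately have wv: "r w v = r x y - L - M" using LIMSEQ_unique by blast
  have "L \<le> t" using LIMSEQ_le_const2[OF \<open>a \<longlonglongrightarrow> L\<close>] a_le by blast
  moreover have "t \<le> r x y - M"
    by (rule LIMSEQ_le_const[of "\<lambda>n. r x y - b n"])
      (use \<open>b \<longlonglongrightarrow> M\<close> le_b in \<open>auto intro!: tendsto_intros\<close>)
  ultimately have "admissible (w, v)"
    unfolding admissible_def gap_def using w(1) v(1) xw vy wv by auto
  moreover have "nested (pairs n) (w, v)" for n
    using w v wv sum[of n] commute[OF v(1) pairs_in(2)] unfolding nested_def gap_def by auto
  ultimately show ?thesis using gap_lim unfolding gap_def by auto
qed

lemma exists_point_at_distance: "\<exists>z\<in>A. r x z = t \<and> r z y = r x y - t"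
proof -
  obtain s where s: "admissible s" "\<And>n. nested (pairs n) s"
    and lim: "(\<lambda>n. gap (pairs n)) \<longlonglongrightarrow> gap s"
    using pairs_limit by blast
  have A: "fst s \<in> A" "snd s \<in> A" using s(1) unfolding admissible_def by auto
  have "gap s = 0"
  proof (rule ccontr)
    assume "gap s \<noteq> 0"
    then have "fst s \<noteq> snd s" using A unfolding gap_def by auto
    then obtain u where u: "u \<in> A" "u \<noteq> fst s" "u \<noteq> snd s" "r (fst s) u + r u (snd s) = gap s"
      using convex[OF A] unfolding gap_def by blast
    text \<open>Splitting at \<open>u\<close> strictly shrinks the gap, while the greedy choice forces the gaps
      of the sequence to decrease by ever smaller amounts.\<close>
    define s' where "s' = (if r x (fst s) + r (fst s) u \<le> t then (u, snd s) else (fst s, u))"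
    have "nested s s'" using u A by (auto simp: s'_def nested_def gap_def)
    then have "admissible s'"
      using admissible_nested[OF s(1)] s(1) u by (auto simp: admissible_def s'_def gap_def)
    have "gap s' < gap s"
      using u A pos[of "fst s" u] pos[of u "snd s"] by (auto simp: s'_def gap_def)
    have "gap (pairs n) - gap s' \<le> 2 * (gap (pairs n) - gap (pairs (Suc n)))" for n
      using pairs_greedy \<open>admissible s'\<close> nested_trans[OF pairs_in s(2) \<open>nested s s'\<close>]
      unfolding refinements_def by blast
    moreover have "(\<lambda>n. 2 * (gap (pairs n) - gap (pairs (Suc n)))) \<longlonglongrightarrow> 2 * (gap s - gap s)"
      by (intro tendsto_intros lim LIMSEQ_Suc[OF lim])
    ultimately have "gap s - gap s' \<le> 2 * (gap s - gap s)"
      using LIMSEQ_le[OF tendsto_diff[OF lim tendsto_const]] by blast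
    with \<open>gap s' < gap s\<close> show False by simp
  qed
  then have "fst s = snd s" using zero_iff A unfolding gap_def by blast
  then show ?thesis using s(1) \<open>gap s = 0\<close> A unfolding admissible_def by auto
qed

end

end

lemma gmetricD:
  assumes "gmetric S d"
  shows "p \<in> S \<Longrightarrow> q \<in> S \<Longrightarrow> d p q = 0 \<longleftrightarrow> p = q"
    and "p \<in> S \<Longrightarrow> q \<in> S \<Longrightarrow> d p q = d q p"
    and "p \<in> S \<Longrightarrow> q \<in> S \<Longrightarrow> s \<in> S \<Longrightarrow> d p s \<le> d p q + d q s"
  using assms unfolding gmetric_def by blast+

lemma enn2real_add: "a < top \<Longrightarrow> b < top \<Longrightarrow> enn2real (a + b) = enn2real a + enn2real b"
  by (cases a; cases b) (auto simp flip: ennreal_plus)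

lemma finite_component_dist_finite:
  assumes "gmetric S d" "x \<in> S" "p \<in> S" "q \<in> S" "d x p < top" "d x q < top"
  shows "d p q < top"
proof -
  have "d p q \<le> d x p + d x q"
    using gmetricD(2,3)[OF assms(1)] assms(2-4) by metis
  also have "\<dots> < top" using assms(5,6) by (simp add: ennreal_add_less_top)
  finally show ?thesis .
qed

lemma finite_component_complete:
  assumes complete: "complete_gmetric S d" and x: "x \<in> S"
    and \<sigma>: "\<forall>n. \<sigma> n \<in> {z \<in> S. d x z < top}"
    and cauchy: "\<forall>e>0. \<exists>N. \<forall>m\<ge>N. \<forall>n\<ge>N. enn2real (d (\<sigma> m) (\<sigma> n)) < e"
  shows "\<exists>l\<in>{z \<in> S. d x z < top}. (\<lambda>n. enn2real (d (\<sigma> n) l)) \<longlonglongrightarrow> 0"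
proof -
  have gm: "gmetric S d" using complete unfolding complete_gmetric_def by blast
  have fin: "d (\<sigma> m) (\<sigma> n) < top" for m n
    using finite_component_dist_finite[OF gm x] \<sigma> by blast
  have "cauchy_in S d \<sigma>"
    using \<sigma> cauchy fin unfolding cauchy_in_def by simp
  then obtain l where l: "l \<in> S" "\<And>e. e > 0 \<Longrightarrow> \<exists>N. \<forall>n\<ge>N. d (\<sigma> n) l < ennreal e"
    using complete unfolding complete_gmetric_def converges_in_def by blast
  obtain N where "\<forall>n\<ge>N. d (\<sigma> n) l < ennreal 1" using l(2)[of 1] by auto
  then have "d (\<sigma> N) l < top" using ennreal_less_top less_trans by blast
  moreover have "d x l \<le> d x (\<sigma> N) + d (\<sigma> N) l" using gmetricD(3)[OF gm x _ l(1)] \<sigma> by blast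
  ultimately have "d x l < top" using \<sigma> by (simp add: le_less_trans)
  moreover have "(\<lambda>n. enn2real (d (\<sigma> n) l)) \<longlonglongrightarrow> 0"
    unfolding LIMSEQ_iff
  proof (intro allI impI)
    fix e :: real assume "e > 0"
    then obtain N where N: "\<forall>n\<ge>N. d (\<sigma> n) l < ennreal e" using l(2) by blast
    have "d (\<sigma> n) l < top" if "n \<ge> N" for n using N that top.not_eq_extremum by fastforce
    with N show "\<exists>N. \<forall>n\<ge>N. norm (enn2real (d (\<sigma> n) l) - 0) < e"
      by (intro exI[of _ N]) auto
  qed
  ultimately show ?thesis using l(1) by blast
qed

lemma finite_component_convex:
  assumes "gmetric S d" "menger_convex S d" "x \<in> S"
    and pq: "p \<in> {z \<in> S. d x z < top}" "q \<in> {z \<in> S. d x z < top}" "p \<noteq> q"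
  shows "\<exists>u\<in>{z \<in> S. d x z < top}. u \<noteq> p \<and> u \<noteq> q \<and>
           enn2real (d p u) + enn2real (d u q) = enn2real (d p q)"
proof -
  obtain u where u: "u \<in> S" "u \<noteq> p" "u \<noteq> q" "d p u + d u q = d p q"
    using assms(2) pq unfolding menger_convex_def by blast
  have "d p q < top" using finite_component_dist_finite[OF assms(1,3)] pq by blast
  moreover have "d p u \<le> d p q" "d u q \<le> d p q"
    unfolding u(4)[symmetric] by (intro add_increasing add_increasing2 order_refl zero_le)+
  ultimately have "d p u < top" "d u q < top" by (auto intro: le_less_trans)
  have "d x u \<le> d x p + d p u" using gmetricD(3)[OF assms(1)] assms(3) pq u(1) by blast
  moreover have "d x p + d p u < top" using pq \<open>d p u < top\<close> by simp
  ultimately have "d x u < top" by (rule le_less_trans)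
  moreover have "enn2real (d p u) + enn2real (d u q) = enn2real (d p q)"
    using u(4) \<open>d p u < top\<close> \<open>d u q < top\<close> by (simp flip: enn2real_add)
  ultimately show ?thesis using u by blast
qed

text \<open>Distances may be infinite, so Menger's theorem is applied within the component of \<open>x\<close>.\<close>

lemma complete_convex_metric_finite_component:
  assumes complete: "complete_gmetric S d" and convex: "menger_convex S d" and x: "x \<in> S"
  shows "complete_convex_metric {z \<in> S. d x z < top} (\<lambda>p q. enn2real (d p q))"
proof -
  have gm: "gmetric S d" using complete unfolding complete_gmetric_def by blast
  let ?C = "{z \<in> S. d x z < top}"
  have fin: "d p q < top" if "p \<in> ?C" "q \<in> ?C" for p q
    using finite_component_dist_finite[OF gm x] that by blast
  show ?thesis
  proof
    fix p q s assume C: "p \<in> ?C" "q \<in> ?C" "s \<in> ?C"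
    have "d p s \<le> d p q + d q s" using gmetricD(3)[OF gm] C by blast
    moreover have "d p q < top" "d q s < top" using fin C by blast+
    ultimately show "enn2real (d p s) \<le> enn2real (d p q) + enn2real (d q s)"
      by (simp add: enn2real_mono flip: enn2real_add)
  next
    fix p q assume C: "p \<in> ?C" "q \<in> ?C"
    then show "enn2real (d p q) = enn2real (d q p)" and "enn2real (d p q) = 0 \<longleftrightarrow> p = q"
      using gmetricD(1,2)[OF gm, of p q] fin[OF C] by (auto simp: enn2real_eq_0_iff)
  next
    fix \<sigma> :: "nat \<Rightarrow> 'a"
    assume "\<forall>n. \<sigma> n \<in> ?C" "\<forall>e>0. \<exists>N. \<forall>m\<ge>N. \<forall>n\<ge>N. enn2real (d (\<sigma> m) (\<sigma> n)) < e"
    then show "\<exists>l\<in>?C. (\<lambda>n. enn2real (d (\<sigma> n) l)) \<longlonglongrightarrow> 0"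
      by (rule finite_component_complete[OF complete x])
  next
    fix p q assume "p \<in> ?C" "q \<in> ?C" "p \<noteq> q"
    then show "\<exists>u\<in>?C. u \<noteq> p \<and> u \<noteq> q \<and> enn2real (d p u) + enn2real (d u q) = enn2real (d p q)"
      by (rule finite_component_convex[OF gm convex x])
  qed
qed

lemma convex_split_dist:
  assumes complete: "complete_gmetric S d" and convex: "menger_convex S d"
    and xy: "x \<in> S" "y \<in> S" "d x y \<le> ennreal (a + b)" and ab: "0 \<le> a" "0 \<le> b"
  shows "\<exists>z\<in>S. d x z \<le> ennreal a \<and> d z y \<le> ennreal b"
proof -
  have gm: "gmetric S d" using complete unfolding complete_gmetric_def by blast
  interpret complete_convex_metric "{z \<in> S. d x z < top}" "\<lambda>p q. enn2real (d p q)"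
    by (rule complete_convex_metric_finite_component[OF complete convex xy(1)])
  have fin: "d x y < top" using xy(3) ennreal_less_top le_less_trans by blast
  have C: "x \<in> {z \<in> S. d x z < top}" "y \<in> {z \<in> S. d x z < top}"
    using xy fin gmetricD(1)[OF gm xy(1) xy(1)] by auto
  have "enn2real (d x y) \<le> a + b" using xy(3) ab by (simp add: enn2real_leI)
  show ?thesis
  proof (cases "enn2real (d x y) \<le> a")
    case True
    have "d x y = ennreal (enn2real (d x y))" using fin by simp
    also have "\<dots> \<le> ennreal a" using True by (rule ennreal_leI)
    finally show ?thesis using xy(2) gmetricD(1)[OF gm xy(2) xy(2)] by auto
  next
    case False
    then obtain z where z: "z \<in> {z \<in> S. d x z < top}" "enn2real (d x z) = a"
        "enn2real (d z y) = enn2real (d x y) - a"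
      using exists_point_at_distance[OF C, of a] ab by auto
    have "d z y < top" using finite_component_dist_finite[OF gm xy(1)] z(1) C(2) by blast
    have "d x z = ennreal a" using z(1,2) ennreal_enn2real[of "d x z"] by simp
    moreover have "d z y = ennreal (enn2real (d x y) - a)"
      using z(3) ennreal_enn2real[OF \<open>d z y < top\<close>] by simp
    moreover have "ennreal (enn2real (d x y) - a) \<le> ennreal b"
      using \<open>enn2real (d x y) \<le> a + b\<close> by (intro ennreal_leI) simp
    ultimately show ?thesis using z(1) by (intro bexI[of _ z]) auto
  qed
qed

lemma hom_carrier_iff:
  "g \<in> hom_carrier A dA B dB \<longleftrightarrow>
     g \<in> extensional A \<and> g \<in> A \<rightarrow> B \<and> (\<forall>x\<in>A. \<forall>y\<in>A. dB (g x) (g y) \<le> dA x y)"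
  unfolding hom_carrier_def nonexp_def by auto

lemma sup_dist_le_iff: "sup_dist A dB g h \<le> c \<longleftrightarrow> (\<forall>x\<in>A. dB (g x) (h x) \<le> c)"
  unfolding sup_dist_def by (simp add: SUP_le_iff)

lemma dist_le_sup_dist: "x \<in> A \<Longrightarrow> dB (g x) (h x) \<le> sup_dist A dB g h"
  unfolding sup_dist_def by (rule SUP_upper)

lemma gmetric_hom:
  assumes "gmetric B dB"
  shows "gmetric (hom_carrier A dA B dB) (sup_dist A dB)"
  unfolding gmetric_def
proof (intro conjI ballI)
  fix g h assume g: "g \<in> hom_carrier A dA B dB" and h: "h \<in> hom_carrier A dA B dB"
  have "sup_dist A dB g h = 0 \<longleftrightarrow> (\<forall>x\<in>A. dB (g x) (h x) = 0)"
    using sup_dist_le_iff[of A dB g h 0] by simp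
  also have "\<dots> \<longleftrightarrow> (\<forall>x\<in>A. g x = h x)"
    using gmetricD(1)[OF assms] g h unfolding hom_carrier_iff by (auto simp: Pi_iff)
  also have "\<dots> \<longleftrightarrow> g = h"
    using g h extensionalityI[of g A h] unfolding hom_carrier_iff by auto
  finally show "sup_dist A dB g h = 0 \<longleftrightarrow> g = h" .
  show "sup_dist A dB g h = sup_dist A dB h g"
    using gmetricD(2)[OF assms] g h unfolding sup_dist_def hom_carrier_iff
    by (intro SUP_cong) (auto simp: Pi_iff)
next
  fix g h l assume ghl: "g \<in> hom_carrier A dA B dB" "h \<in> hom_carrier A dA B dB" "l \<in> hom_carrier A dA B dB"
  have "dB (g x) (l x) \<le> sup_dist A dB g h + sup_dist A dB h l" if "x \<in> A" for x
  proof -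
    have "dB (g x) (l x) \<le> dB (g x) (h x) + dB (h x) (l x)"
      using gmetricD(3)[OF assms] ghl that unfolding hom_carrier_iff by blast
    also have "\<dots> \<le> sup_dist A dB g h + sup_dist A dB h l"
      by (intro add_mono dist_le_sup_dist that)
    finally show ?thesis .
  qed
  then show "sup_dist A dB g l \<le> sup_dist A dB g h + sup_dist A dB h l"
    unfolding sup_dist_le_iff by blast
qed

lemma hom_cauchy_converges:
  assumes complete: "complete_gmetric B dB"
    and cauchy: "cauchy_in (hom_carrier A dA B dB) (sup_dist A dB) \<sigma>"
  shows "\<exists>L. converges_in (hom_carrier A dA B dB) (sup_dist A dB) \<sigma> L"
proof -
  have gm: "gmetric B dB"
    and complete_B: "\<And>\<tau>. cauchy_in B dB \<tau> \<Longrightarrow> \<exists>l. converges_in B dB \<tau> l"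
    using complete unfolding complete_gmetric_def by blast+
  have \<sigma>: "\<And>n x. x \<in> A \<Longrightarrow> \<sigma> n x \<in> B"
    and \<sigma>_nonexp: "\<And>n x y. x \<in> A \<Longrightarrow> y \<in> A \<Longrightarrow> dB (\<sigma> n x) (\<sigma> n y) \<le> dA x y"
    and \<sigma>_cauchy: "\<And>e. e > 0 \<Longrightarrow> \<exists>N. \<forall>m\<ge>N. \<forall>n\<ge>N. sup_dist A dB (\<sigma> m) (\<sigma> n) < ennreal e"
    using cauchy unfolding cauchy_in_def hom_carrier_iff by (auto simp: Pi_iff)
  have pointwise_cauchy: "cauchy_in B dB (\<lambda>n. \<sigma> n x)" if x: "x \<in> A" for x
    unfolding cauchy_in_def
  proof (intro conjI allI impI)
    show "\<sigma> n x \<in> B" for n using \<sigma>[OF x] .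
    fix e :: real assume "e > 0"
    then obtain N where N: "\<forall>m\<ge>N. \<forall>n\<ge>N. sup_dist A dB (\<sigma> m) (\<sigma> n) < ennreal e"
      using \<sigma>_cauchy by blast
    have "dB (\<sigma> m x) (\<sigma> n x) < ennreal e" if "m \<ge> N" "n \<ge> N" for m n
      using le_less_trans[OF dist_le_sup_dist[OF x, of dB "\<sigma> m" "\<sigma> n"]] N that by blast
    then show "\<exists>N. \<forall>m\<ge>N. \<forall>n\<ge>N. dB (\<sigma> m x) (\<sigma> n x) < ennreal e" by blast
  qed
  have "\<forall>x\<in>A. \<exists>l. converges_in B dB (\<lambda>n. \<sigma> n x) l"
    using complete_B pointwise_cauchy by blast
  then obtain L0 where L0: "\<forall>x\<in>A. converges_in B dB (\<lambda>n. \<sigma> n x) (L0 x)"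
    by (rule bchoice[elim_format]) blast
  define L where "L = restrict L0 A"
  have L: "\<And>x. x \<in> A \<Longrightarrow> L x \<in> B"
    and pointwise: "\<And>x e. x \<in> A \<Longrightarrow> e > 0 \<Longrightarrow> \<forall>\<^sub>F n in sequentially. dB (\<sigma> n x) (L x) < ennreal e"
    using L0 unfolding converges_in_def L_def eventually_sequentially by auto
  have uniform: "dB (\<sigma> n x) (L x) \<le> ennreal e"
    if N: "\<forall>m\<ge>N. \<forall>n\<ge>N. sup_dist A dB (\<sigma> m) (\<sigma> n) < ennreal e" and "n \<ge> N" "x \<in> A" for N n x e
  proof (rule ennreal_le_epsilon)
    fix e' :: real assume "e' > 0"
    then obtain m where m: "m \<ge> N" "dB (\<sigma> m x) (L x) < ennreal e'"
      using eventually_happens'[OF sequentially_bot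
          eventually_conj[OF eventually_ge_at_top pointwise[OF \<open>x \<in> A\<close>]]] by blast
    have "dB (\<sigma> n x) (L x) \<le> dB (\<sigma> n x) (\<sigma> m x) + dB (\<sigma> m x) (L x)"
      using gmetricD(3)[OF gm] \<sigma> L \<open>x \<in> A\<close> by blast
    also have "\<dots> \<le> ennreal e + ennreal e'"
      using N \<open>n \<ge> N\<close> m dist_le_sup_dist[OF \<open>x \<in> A\<close>, of dB "\<sigma> n" "\<sigma> m"]
      by (intro add_mono) (auto dest: order.strict_implies_order intro: order_trans)
    finally show "dB (\<sigma> n x) (L x) \<le> ennreal e + ennreal e'" .
  qed
  have "dB (L x) (L y) \<le> dA x y" if "x \<in> A" "y \<in> A" for x y
  proof (rule ennreal_le_epsilon)
    fix e :: real assume "e > 0"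
    then have "e/2 > 0" by simp
    then obtain m where m: "dB (\<sigma> m x) (L x) < ennreal (e/2)" "dB (\<sigma> m y) (L y) < ennreal (e/2)"
      using eventually_happens'[OF sequentially_bot
          eventually_conj[OF pointwise[OF \<open>x \<in> A\<close>] pointwise[OF \<open>y \<in> A\<close>]]] by blast
    have "dB (L x) (L y) \<le> dB (L x) (\<sigma> m x) + dB (\<sigma> m x) (L y)"
      using gmetricD(3)[OF gm] \<sigma> L that by blast
    also have "\<dots> \<le> dB (L x) (\<sigma> m x) + (dB (\<sigma> m x) (\<sigma> m y) + dB (\<sigma> m y) (L y))"
      using gmetricD(3)[OF gm] \<sigma> L that by (intro add_left_mono) blast
    also have "\<dots> = dB (L x) (\<sigma> m x) + dB (\<sigma> m x) (\<sigma> m y) + dB (\<sigma> m y) (L y)"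
      by (simp add: ac_simps)
    also have "\<dots> \<le> ennreal (e/2) + dA x y + ennreal (e/2)"
      using m \<sigma>_nonexp[OF that, of m] gmetricD(2)[OF gm] \<sigma> L that
      by (intro add_mono) (auto dest: order.strict_implies_order)
    also have "\<dots> = dA x y + ennreal e"
      using \<open>e > 0\<close> ennreal_plus[of "e/2" "e/2"] by (simp add: ac_simps)
    finally show "dB (L x) (L y) \<le> dA x y + ennreal e" .
  qed
  then have "L \<in> hom_carrier A dA B dB"
    unfolding hom_carrier_iff L_def using L[unfolded L_def] by auto
  moreover have "\<exists>N. \<forall>n\<ge>N. sup_dist A dB (\<sigma> n) L < ennreal e" if "e > 0" for e
  proof -
    obtain N where N: "\<forall>m\<ge>N. \<forall>n\<ge>N. sup_dist A dB (\<sigma> m) (\<sigma> n) < ennreal (e/2)"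
      using \<sigma>_cauchy[of "e/2"] \<open>e > 0\<close> by auto
    have "sup_dist A dB (\<sigma> n) L \<le> ennreal (e/2)" if "n \<ge> N" for n
      unfolding sup_dist_le_iff using uniform[OF N that] by blast
    moreover have "ennreal (e/2) < ennreal e" using \<open>e > 0\<close> by (simp add: ennreal_less_iff)
    ultimately show ?thesis by (intro exI[of _ N] allI impI) (auto intro: le_less_trans)
  qed
  ultimately show ?thesis unfolding converges_in_def by blast
qed

lemma complete_hom:
  "complete_gmetric B dB \<Longrightarrow> complete_gmetric (hom_carrier A dA B dB) (sup_dist A dB)"
  using gmetric_hom hom_cauchy_converges unfolding complete_gmetric_def by blast

lemma isometry_hom_map:
  assumes "isometry B dB C dC k"
  shows "isometry (hom_carrier A dA B dB) (sup_dist A dB) (hom_carrier A dA C dC) (sup_dist A dC)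
           (hom_map A k)"
proof -
  have k: "\<And>p. p \<in> B \<Longrightarrow> k p \<in> C" "\<And>p q. p \<in> B \<Longrightarrow> q \<in> B \<Longrightarrow> dC (k p) (k q) = dB p q"
    using assms unfolding isometry_def by auto
  show ?thesis
    unfolding isometry_def
  proof (intro conjI ballI funcsetI)
    fix g assume "g \<in> hom_carrier A dA B dB"
    then show "hom_map A k g \<in> hom_carrier A dA C dC"
      using k unfolding hom_carrier_iff hom_map_def by (auto simp: Pi_iff)
  next
    fix g h assume "g \<in> hom_carrier A dA B dB" "h \<in> hom_carrier A dA B dB"
    then show "sup_dist A dC (hom_map A k g) (hom_map A k h) = sup_dist A dB g h"
      using k unfolding hom_carrier_iff hom_map_def sup_dist_def
      by (intro SUP_cong) (auto simp: Pi_iff)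
  qed
qed

lemma hom_map_hom_map:
  "g \<in> A \<rightarrow> B \<Longrightarrow> (\<And>x. x \<in> B \<Longrightarrow> k (k' x) = k'' x) \<Longrightarrow>
     hom_map A k (hom_map A k' g) = hom_map A k'' g"
  unfolding hom_map_def by (auto simp: Pi_iff)

lemma hom_map_id:
  "g \<in> extensional A \<Longrightarrow> g \<in> A \<rightarrow> B \<Longrightarrow> (\<And>x. x \<in> B \<Longrightarrow> k x = x) \<Longrightarrow> hom_map A k g = g"
  unfolding hom_map_def by (auto simp: Pi_iff extensional_restrict intro: extensionalityI[of _ A])

lemma directed_diagram_hom:
  assumes "directed_diagram le I S d f"
  shows "directed_diagram le I (\<lambda>i. hom_carrier A dA (S i) (d i)) (\<lambda>i. sup_dist A (d i))
           (\<lambda>i j. hom_map A (f i j))"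
proof -
  have complete: "\<And>i. i \<in> I \<Longrightarrow> complete_gmetric (S i) (d i)"
    and f: "\<And>i j. i \<in> I \<Longrightarrow> j \<in> I \<Longrightarrow> le i j \<Longrightarrow> isometry (S i) (d i) (S j) (d j) (f i j)"
    and f_id: "\<And>i x. i \<in> I \<Longrightarrow> x \<in> S i \<Longrightarrow> f i i x = x"
    and f_comp: "\<And>i j l x. i \<in> I \<Longrightarrow> j \<in> I \<Longrightarrow> l \<in> I \<Longrightarrow> le i j \<Longrightarrow> le j l \<Longrightarrow> x \<in> S i
      \<Longrightarrow> f j l (f i j x) = f i l x"
    using assms unfolding directed_diagram_def by blast+
  show ?thesis
    unfolding directed_diagram_def
  proof (intro conjI ballI impI)
    fix i assume "i \<in> I"
    then show "complete_gmetric (hom_carrier A dA (S i) (d i)) (sup_dist A (d i))"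
      by (intro complete_hom complete)
  next
    fix i j assume "i \<in> I" "j \<in> I" "le i j"
    then show "isometry (hom_carrier A dA (S i) (d i)) (sup_dist A (d i))
      (hom_carrier A dA (S j) (d j)) (sup_dist A (d j)) (hom_map A (f i j))"
      by (intro isometry_hom_map f)
  next
    fix i g assume "i \<in> I" "g \<in> hom_carrier A dA (S i) (d i)"
    then show "hom_map A (f i i) g = g"
      using f_id unfolding hom_carrier_iff by (intro hom_map_id[where B = "S i"]) auto
  next
    fix i j l g assume "i \<in> I" "j \<in> I" "l \<in> I" "le i j" "le j l" "g \<in> hom_carrier A dA (S i) (d i)"
    then show "hom_map A (f j l) (hom_map A (f i j) g) = hom_map A (f i l) g"
      using f_comp unfolding hom_carrier_iff by (intro hom_map_hom_map[where B = "S i"]) auto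
  qed (use assms[unfolded directed_diagram_def] in blast)+
qed

lemma dir_colim_cocone_hom:
  assumes cocone: "dir_colim_cocone le I S d f T dT k"
    and dense: "\<And>g e. g \<in> hom_carrier A dA T dT \<Longrightarrow> e > 0 \<Longrightarrow>
      \<exists>i\<in>I. \<exists>h\<in>hom_carrier A dA (S i) (d i). sup_dist A dT (hom_map A (k i) h) g < ennreal e"
  shows "dir_colim_cocone le I (\<lambda>i. hom_carrier A dA (S i) (d i)) (\<lambda>i. sup_dist A (d i))
           (\<lambda>i j. hom_map A (f i j)) (hom_carrier A dA T dT) (sup_dist A dT) (\<lambda>i. hom_map A (k i))"
proof -
  have diagram: "directed_diagram le I S d f" and complete: "complete_gmetric T dT"
    and k: "\<And>i. i \<in> I \<Longrightarrow> isometry (S i) (d i) T dT (k i)"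
    and compatible: "\<And>i j x. i \<in> I \<Longrightarrow> j \<in> I \<Longrightarrow> le i j \<Longrightarrow> x \<in> S i \<Longrightarrow> k j (f i j x) = k i x"
    using cocone unfolding dir_colim_cocone_def by blast+
  show ?thesis
    unfolding dir_colim_cocone_def
  proof (intro conjI ballI impI allI)
    fix i j g assume "i \<in> I" "j \<in> I" "le i j" "g \<in> hom_carrier A dA (S i) (d i)"
    then show "hom_map A (k j) (hom_map A (f i j) g) = hom_map A (k i) g"
      using compatible unfolding hom_carrier_iff by (intro hom_map_hom_map[where B = "S i"]) auto
  qed (use directed_diagram_hom[OF diagram] complete_hom[OF complete] isometry_hom_map[OF k] dense
       in simp_all)
qed

lemma hom_two_pt_iff:
  assumes "gmetric B dB"
  shows "g \<in> hom_carrier two_pt_carrier (two_pt_dist \<delta>) B dB \<longleftrightarrow>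
     g True \<in> B \<and> g False \<in> B \<and> dB (g True) (g False) \<le> ennreal \<delta>"
  using gmetricD(1,2)[OF assms, of "g True" "g False"] gmetricD(1)[OF assms]
  unfolding hom_carrier_iff two_pt_carrier_def two_pt_dist_def
  by (auto simp: Pi_iff all_bool_eq)

lemma sup_dist_two_pt:
  "sup_dist two_pt_carrier dB g h = max (dB (g True) (h True)) (dB (g False) (h False))"
  unfolding sup_dist_def two_pt_carrier_def UNIV_bool by (simp add: sup_max max.commute)

lemma hom_map_two_pt: "hom_map two_pt_carrier k g = (\<lambda>c. k (g c))"
  unfolding hom_map_def two_pt_carrier_def by auto

lemma cocone_approx_pair:
  assumes cocone: "dir_colim_cocone le I S d f T dT k" and "a \<in> T" "b \<in> T" "\<eta> > 0"
  shows "\<exists>l\<in>I. \<exists>x\<in>S l. \<exists>y\<in>S l. dT (k l x) a < ennreal \<eta> \<and> dT (k l y) b < ennreal \<eta>"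
proof -
  have dense: "\<And>z. z \<in> T \<Longrightarrow> \<exists>i\<in>I. \<exists>x\<in>S i. dT (k i x) z < ennreal \<eta>"
    and compatible: "\<And>i j x. i \<in> I \<Longrightarrow> j \<in> I \<Longrightarrow> le i j \<Longrightarrow> x \<in> S i \<Longrightarrow> k j (f i j x) = k i x"
    and diagram: "directed_diagram le I S d f"
    using cocone \<open>\<eta> > 0\<close> unfolding dir_colim_cocone_def by blast+
  have directed: "\<And>i j. i \<in> I \<Longrightarrow> j \<in> I \<Longrightarrow> \<exists>l\<in>I. le i l \<and> le j l"
    and f: "\<And>i j. i \<in> I \<Longrightarrow> j \<in> I \<Longrightarrow> le i j \<Longrightarrow> f i j \<in> S i \<rightarrow> S j"
    using diagram unfolding directed_diagram_def isometry_def by blast+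
  obtain i x where "i \<in> I" "x \<in> S i" "dT (k i x) a < ennreal \<eta>"
    using dense[OF \<open>a \<in> T\<close>] by blast
  moreover obtain j y where "j \<in> I" "y \<in> S j" "dT (k j y) b < ennreal \<eta>"
    using dense[OF \<open>b \<in> T\<close>] by blast
  ultimately obtain l where l: "l \<in> I" "le i l" "le j l"
    and "dT (k l (f i l x)) a < ennreal \<eta>" "dT (k l (f j l y)) b < ennreal \<eta>"
    using directed compatible by metis
  moreover have "f i l x \<in> S l" "f j l y \<in> S l"
    using f \<open>i \<in> I\<close> \<open>j \<in> I\<close> \<open>x \<in> S i\<close> \<open>y \<in> S j\<close> l by blast+
  ultimately show ?thesis by blast
qed

lemma dense_hom_two_pt:
  assumes "0 \<le> \<delta>" and cocone: "dir_colim_cocone le I S d f T dT k"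
    and convex: "\<forall>i\<in>I. menger_convex (S i) (d i)"
    and g: "g \<in> hom_carrier two_pt_carrier (two_pt_dist \<delta>) T dT" and "e > 0"
  shows "\<exists>i\<in>I. \<exists>h\<in>hom_carrier two_pt_carrier (two_pt_dist \<delta>) (S i) (d i).
           sup_dist two_pt_carrier dT (hom_map two_pt_carrier (k i) h) g < ennreal e"
proof -
  have gT: "gmetric T dT"
    and complete: "\<And>i. i \<in> I \<Longrightarrow> complete_gmetric (S i) (d i)"
    and k: "\<And>i. i \<in> I \<Longrightarrow> isometry (S i) (d i) T dT (k i)"
    using cocone unfolding dir_colim_cocone_def directed_diagram_def complete_gmetric_def by blast+
  have gS: "gmetric (S i) (d i)" if "i \<in> I" for i
    using complete[OF that] unfolding complete_gmetric_def by blast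
  define a b where "a = g True" and "b = g False"
  have ab: "a \<in> T" "b \<in> T" "dT a b \<le> ennreal \<delta>"
    using g unfolding hom_two_pt_iff[OF gT] a_def b_def by auto
  define \<eta> where "\<eta> = e / 3"
  have "\<eta> > 0" using \<open>e > 0\<close> by (simp add: \<eta>_def)
  then obtain l x y where l: "l \<in> I" "x \<in> S l" "y \<in> S l"
    and xa: "dT (k l x) a < ennreal \<eta>" and yb: "dT (k l y) b < ennreal \<eta>"
    using cocone_approx_pair[OF cocone ab(1,2)] by blast
  have kl: "k l x \<in> T" "k l y \<in> T" "\<And>p q. p \<in> S l \<Longrightarrow> q \<in> S l \<Longrightarrow> dT (k l p) (k l q) = d l p q"
    using k[OF l(1)] l unfolding isometry_def by auto
  text \<open>Shorten the segment from \<open>x\<close> to \<open>y\<close> to length at most \<open>\<delta>\<close>, losing at most \<open>2\<eta>\<close> at \<open>y\<close>.\<close>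
  have "d l x y = dT (k l x) (k l y)" using kl(3) l by simp
  also have "\<dots> \<le> dT (k l x) a + dT a (k l y)"
    using gmetricD(3)[OF gT] kl ab by blast
  also have "\<dots> \<le> dT (k l x) a + (dT a b + dT b (k l y))"
    using gmetricD(3)[OF gT] kl ab by (intro add_left_mono) blast
  also have "\<dots> \<le> ennreal \<eta> + (ennreal \<delta> + ennreal \<eta>)"
    using xa yb ab(3) gmetricD(2)[OF gT ab(2) kl(2)] by (intro add_mono) auto
  also have "\<dots> = ennreal (\<delta> + 2 * \<eta>)"
    using \<open>0 \<le> \<delta>\<close> \<open>\<eta> > 0\<close> by (simp add: ac_simps flip: ennreal_plus)
  finally have dxy: "d l x y \<le> ennreal (\<delta> + 2 * \<eta>)" .
  obtain z where z: "z \<in> S l" "d l x z \<le> ennreal \<delta>" "d l z y \<le> ennreal (2 * \<eta>)"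
    using convex_split_dist[OF complete[OF l(1)] bspec[OF convex l(1)] l(2,3) dxy \<open>0 \<le> \<delta>\<close>] \<open>\<eta> > 0\<close>
    by auto
  define h where "h = (\<lambda>c::bool. if c then x else z)"
  have h: "h \<in> hom_carrier two_pt_carrier (two_pt_dist \<delta>) (S l) (d l)"
    unfolding hom_two_pt_iff[OF gS[OF l(1)]] h_def using l z by simp
  have "dT (k l z) b \<le> dT (k l z) (k l y) + dT (k l y) b"
    using gmetricD(3)[OF gT] k[OF l(1)] z(1) l(3) ab(2) unfolding isometry_def by blast
  also have "\<dots> \<le> ennreal (2 * \<eta>) + dT (k l y) b"
    using kl(3)[OF z(1) l(3)] z(3) by (intro add_right_mono) simp
  also have "\<dots> < ennreal (2 * \<eta>) + ennreal \<eta>"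
    using yb by (simp add: ennreal_add_left_cancel_less)
  also have "\<dots> = ennreal e"
    using \<open>\<eta> > 0\<close> by (simp add: \<eta>_def flip: ennreal_plus)
  finally have "dT (k l z) b < ennreal e" .
  moreover have "dT (k l x) a < ennreal e"
    using \<open>e > 0\<close> by (intro less_trans[OF xa]) (simp add: \<eta>_def ennreal_less_iff)
  ultimately have "sup_dist two_pt_carrier dT (hom_map two_pt_carrier (k l) h) g < ennreal e"
    unfolding sup_dist_two_pt hom_map_two_pt h_def a_def b_def by simp
  with l(1) h show ?thesis by blast
qed

theorem mainTheorem18:
  fixes le :: "'i \<Rightarrow> 'i \<Rightarrow> bool" and I :: "'i set"
    and S :: "'i \<Rightarrow> 'a set" and d :: "'i \<Rightarrow> 'a \<Rightarrow> 'a \<Rightarrow> ennreal"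
    and f :: "'i \<Rightarrow> 'i \<Rightarrow> 'a \<Rightarrow> 'a"
    and T :: "'b set" and dT :: "'b \<Rightarrow> 'b \<Rightarrow> ennreal" and k :: "'i \<Rightarrow> 'a \<Rightarrow> 'b"
    and \<delta> :: real
  assumes "\<delta> > 0"
    and "dir_colim_cocone le I S d f T dT k"
    and "\<forall>i\<in>I. menger_convex (S i) (d i)"
  shows "dir_colim_cocone le I
           (\<lambda>i. hom_carrier two_pt_carrier (two_pt_dist \<delta>) (S i) (d i))
           (\<lambda>i. sup_dist two_pt_carrier (d i))
           (\<lambda>i j. hom_map two_pt_carrier (f i j))
           (hom_carrier two_pt_carrier (two_pt_dist \<delta>) T dT)
           (sup_dist two_pt_carrier dT)
           (\<lambda>i. hom_map two_pt_carrier (k i))"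
  using dir_colim_cocone_hom[OF assms(2) dense_hom_two_pt[OF _ assms(2,3)]] assms(1) by simp

end
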